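(* For every real $s$, the measures $\Phi_s(P\|Q)$, $\Omega_s(P\|Q)$ and $\Omega_s(Q\|P)$ are nonnegative and jointly convex in the pair $(P,Q)\in\Gamma_n\times\Gamma_n$; and for every $s\in[0,4]$, the measures $\zeta_s(P\|Q)$ and $\zeta_s(Q\|P)$ are nonnegative and jointly convex in $(P,Q)\in\Gamma_n\times\Gamma_n$.
   Context: $\Gamma_n=\{P=(p_1,\dots,p_n): p_i>0,\ \sum_i p_i=1\}$, $n\ge2$. For $P,Q\in\Gamma_n$ and $s\in\mathbb{R}$: $\Phi_s(P\|Q)=[s(s-1)]^{-1}\big[\sum_i p_i^s q_i^{1-s}-1\big]$ for $s\ne0,1$; $\Phi_0(P\|Q)=\sum_i q_i\ln(q_i/p_i)$; $\Phi_1(P\|Q)=\sum_i p_i\ln(p_i/q_i)$. $\Omega_s(P\|Q)=[s(s-1)]^{-1}\big[\sum_i p_i\big(\frac{p_i+q_i}{2p_i}\big)^s-1\big]$ for $s\ne0,1$; $\Omega_0(P\|Q)=\sum_i p_i\ln\frac{2p_i}{p_i+q_i}$; $\Omega_1(P\|Q)=\sum_i\frac{p_i+q_i}{2}\ln\frac{p_i+q_i}{2p_i}$. $\zeta_s(P\|Q)=(s-1)^{-1}\sum_i(p_i-q_i)\big(\frac{p_i+q_i}{2q_i}\big)^{s-1}$ for $s\ne1$; $\zeta_1(P\|Q)=\sum_i(p_i-q_i)\ln\frac{p_i+q_i}{2q_i}$. $\Omega_s(Q\|P)$ and $\zeta_s(Q\|P)$ are obtained by interchanging the roles of $p_i$ and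 $q_i$. *)

theory Defs
  imports "HOL-Analysis.Analysis"
begin

text \<open>Probability distributions on n points, represented as functions nat => real,
  only the values at indices 0..n-1 are relevant.\<close>

definition Gamma :: "nat \<Rightarrow> (nat \<Rightarrow> real) set" where
  "Gamma n = {p. (\<forall>i<n. 0 < p i) \<and> (\<Sum>i<n. p i) = 1}"

definition Phi :: "real \<Rightarrow> nat \<Rightarrow> (nat \<Rightarrow> real) \<Rightarrow> (nat \<Rightarrow> real) \<Rightarrow> real" where
  "Phi s n p q =
    (if s = 0 then (\<Sum>i<n. q i * ln (q i / p i))
     else if s = 1 then (\<Sum>i<n. p i * ln (p i / q i))
     else ((\<Sum>i<n. p i powr s * q i powr (1 - s)) - 1) / (s * (s - 1)))"

definition Omega :: "real \<Rightarrow> nat \<Rightarrow> (nat \<Rightarrow> real) \<Rightarrow> (nat \<Rightarrow> real) \<Rightarrow> real" where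
  "Omega s n p q =
    (if s = 0 then (\<Sum>i<n. p i * ln (2 * p i / (p i + q i)))
     else if s = 1 then (\<Sum>i<n. (p i + q i) / 2 * ln ((p i + q i) / (2 * p i)))
     else ((\<Sum>i<n. p i * ((p i + q i) / (2 * p i)) powr s) - 1) / (s * (s - 1)))"

definition Zeta :: "real \<Rightarrow> nat \<Rightarrow> (nat \<Rightarrow> real) \<Rightarrow> (nat \<Rightarrow> real) \<Rightarrow> real" where
  "Zeta s n p q =
    (if s = 1 then (\<Sum>i<n. (p i - q i) * ln ((p i + q i) / (2 * q i)))
     else (\<Sum>i<n. (p i - q i) * ((p i + q i) / (2 * q i)) powr (s - 1)) / (s - 1))"

definition nonneg_on_Gamma :: "nat \<Rightarrow> ((nat \<Rightarrow> real) \<Rightarrow> (nat \<Rightarrow> real) \<Rightarrow> real) \<Rightarrow> bool" where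
  "nonneg_on_Gamma n D = (\<forall>p\<in>Gamma n. \<forall>q\<in>Gamma n. 0 \<le> D p q)"

definition jointly_convex_on_Gamma :: "nat \<Rightarrow> ((nat \<Rightarrow> real) \<Rightarrow> (nat \<Rightarrow> real) \<Rightarrow> real) \<Rightarrow> bool" where
  "jointly_convex_on_Gamma n D =
    (\<forall>p1\<in>Gamma n. \<forall>q1\<in>Gamma n. \<forall>p2\<in>Gamma n. \<forall>q2\<in>Gamma n. \<forall>t::real. 0 \<le> t \<and> t \<le> 1 \<longrightarrow>
       D (\<lambda>i. t * p1 i + (1 - t) * p2 i) (\<lambda>i. t * q1 i + (1 - t) * q2 i)
         \<le> t * D p1 q1 + (1 - t) * D p2 q2)"

end

theory Submission
  imports Defs
begin

text \<open>Each measure is an f-divergence D_f(A, B) = \<Sum>i. b_i f(a_i / b_i) of two mixtures A, B of P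
  and Q: Phi_s(P, Q) = D_phi(P, Q), Omega_s(P, Q) = D_phi((P + Q)/2, P) and
  zeta_s(P, Q) = D_g((P + Q)/2, Q), where phi_s(u) = (u^s - 1)/(s(s - 1)) (with -ln u and u ln u
  at s = 0, 1) and g_s(u) = 2(u - 1) u^(s-1)/(s - 1). The perspective (x, y) \<mapsto> y f(x/y) of a
  convex f is jointly convex and mixing is linear, so D_f of mixtures is jointly convex; Jensen's
  inequality gives D_f(A, B) \<ge> f(1) = 0. Finally g_s'' = 2 u^(s-3) (s u - s + 2) is nonnegative
  on u > 1/2, the range of (p + q)/(2q), exactly when 0 \<le> s \<le> 4.\<close>

definition f_divergence :: "(real \<Rightarrow> real) \<Rightarrow> nat \<Rightarrow> (nat \<Rightarrow> real) \<Rightarrow> (nat \<Rightarrow> real) \<Rightarrow> real" where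
  "f_divergence f n p q = (\<Sum>i<n. q i * f (p i / q i))"

definition mixture :: "real \<Rightarrow> (nat \<Rightarrow> real) \<Rightarrow> (nat \<Rightarrow> real) \<Rightarrow> nat \<Rightarrow> real" where
  "mixture t p q = (\<lambda>i. t * p i + (1 - t) * q i)"

lemma mixture_1 [simp]: "mixture 1 p q = p"
  and mixture_0 [simp]: "mixture 0 p q = q"
  by (simp_all add: mixture_def)

lemma mixture_half_commute: "mixture (1/2) q p = mixture (1/2) p q"
  by (simp add: mixture_def algebra_simps)

lemma mixture_mixture:
  "mixture a (mixture t p1 p2) (mixture t q1 q2) = mixture t (mixture a p1 q1) (mixture a p2 q2)"
  by (simp add: mixture_def algebra_simps)

lemma convex_comb_pos:
  fixes x y t :: real
  assumes "0 < x" "0 < y" "0 \<le> t" "t \<le> 1"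
  shows "0 < t * x + (1 - t) * y"
  using convex_bound_lt[of "-x" 0 "-y" t "1 - t"] assms by simp

lemma mixture_in_Gamma:
  assumes "p \<in> Gamma n" "q \<in> Gamma n" "0 \<le> t" "t \<le> 1"
  shows "mixture t p q \<in> Gamma n"
  using assms unfolding Gamma_def mixture_def
  by (auto intro!: convex_comb_pos simp: sum.distrib sum_distrib_left[symmetric])

lemma convex_on_perspective:
  fixes f :: "real \<Rightarrow> real"
  assumes f: "convex_on S f" and "0 < y1" "0 < y2" "0 \<le> t" "t \<le> 1"
    and "x1 / y1 \<in> S" "x2 / y2 \<in> S"
  shows "(t * y1 + (1 - t) * y2) * f ((t * x1 + (1 - t) * x2) / (t * y1 + (1 - t) * y2))
     \<le> t * (y1 * f (x1 / y1)) + (1 - t) * (y2 * f (x2 / y2))"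
proof -
  define y where "y = t * y1 + (1 - t) * y2"
  define \<mu> where "\<mu> = (1 - t) * y2 / y"
  have "0 < y" unfolding y_def using assms by (intro convex_comb_pos)
  then have "0 \<le> \<mu>" "\<mu> \<le> 1" and one_minus_\<mu>: "1 - \<mu> = t * y1 / y"
    using assms by (auto simp: \<mu>_def y_def field_simps)
  \<comment> \<open>the ratio of the mixtures is the mixture of the ratios with weights t y1 : (1 - t) y2\<close>
  have "(t * x1 + (1 - t) * x2) / y = (1 - \<mu>) *\<^sub>R (x1 / y1) + \<mu> *\<^sub>R (x2 / y2)"
    unfolding one_minus_\<mu> using \<open>0 < y\<close> assms by (simp add: \<mu>_def field_simps)
  then have "f ((t * x1 + (1 - t) * x2) / y) \<le> (1 - \<mu>) * f (x1 / y1) + \<mu> * f (x2 / y2)"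
    using convex_onD[OF f \<open>0 \<le> \<mu>\<close> \<open>\<mu> \<le> 1\<close>, of "x1 / y1" "x2 / y2"] assms by simp
  then have "y * f ((t * x1 + (1 - t) * x2) / y) \<le> y * ((1 - \<mu>) * f (x1 / y1) + \<mu> * f (x2 / y2))"
    using \<open>0 < y\<close> by simp
  also have "\<dots> = t * (y1 * f (x1 / y1)) + (1 - t) * (y2 * f (x2 / y2))"
    unfolding one_minus_\<mu> using \<open>0 < y\<close> by (simp add: \<mu>_def field_simps)
  finally show ?thesis unfolding y_def .
qed

lemma f_divergence_jointly_convex:
  assumes f: "convex_on S f" and "0 \<le> t" "t \<le> 1"
    and pos: "\<And>i. i < n \<Longrightarrow> 0 < q1 i \<and> 0 < q2 i"
    and ratio: "\<And>i. i < n \<Longrightarrow> p1 i / q1 i \<in> S \<and> p2 i / q2 i \<in> S"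
  shows "f_divergence f n (mixture t p1 p2) (mixture t q1 q2)
    \<le> t * f_divergence f n p1 q1 + (1 - t) * f_divergence f n p2 q2"
  unfolding f_divergence_def mixture_def sum_distrib_left sum.distrib[symmetric]
  by (intro sum_mono convex_on_perspective[OF f _ _ \<open>0 \<le> t\<close> \<open>t \<le> 1\<close>]) (use pos ratio in auto)

lemma f_divergence_Jensen:
  assumes f: "convex_on S f" and "0 < n"
    and q: "(\<Sum>i<n. q i) = 1" "\<And>i. i < n \<Longrightarrow> 0 < q i"
    and ratio: "\<And>i. i < n \<Longrightarrow> p i / q i \<in> S"
  shows "f (\<Sum>i<n. p i) \<le> f_divergence f n p q"
proof -
  have "(\<Sum>i<n. p i) = (\<Sum>i<n. q i *\<^sub>R (p i / q i))"
    using q(2) by (intro sum.cong refl) (simp add: less_imp_neq[symmetric])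
  also have "f \<dots> \<le> f_divergence f n p q"
    unfolding f_divergence_def
    using \<open>0 < n\<close> q ratio by (intro convex_on_sum[OF _ _ f]) (auto intro: less_imp_le)
  finally show ?thesis .
qed

lemma f_divergence_of_mixtures_on_Gamma:
  assumes f: "convex_on S f" "f 1 = 0" and "0 < n"
    and a: "0 \<le> a" "a \<le> 1" and c: "0 \<le> c" "c \<le> 1"
    and ratio: "\<And>p q i. p \<in> Gamma n \<Longrightarrow> q \<in> Gamma n \<Longrightarrow> i < n \<Longrightarrow>
      mixture a p q i / mixture c p q i \<in> S"
    and D: "\<And>p q. p \<in> Gamma n \<Longrightarrow> q \<in> Gamma n \<Longrightarrow>
      D p q = f_divergence f n (mixture a p q) (mixture c p q)"
  shows "nonneg_on_Gamma n D \<and> jointly_convex_on_Gamma n D"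
proof
  show "nonneg_on_Gamma n D"
    unfolding nonneg_on_Gamma_def
  proof (intro ballI)
    fix p q assume pq: "p \<in> Gamma n" "q \<in> Gamma n"
    then have "mixture a p q \<in> Gamma n" "mixture c p q \<in> Gamma n"
      using a c by (auto intro: mixture_in_Gamma)
    then have "f (\<Sum>i<n. mixture a p q i) \<le> f_divergence f n (mixture a p q) (mixture c p q)"
      using ratio[OF pq] by (intro f_divergence_Jensen[OF f(1) \<open>0 < n\<close>]) (auto simp: Gamma_def)
    with \<open>mixture a p q \<in> Gamma n\<close> have "f 1 \<le> D p q"
      using D[OF pq] by (simp add: Gamma_def)
    then show "0 \<le> D p q" using f(2) by simp
  qed
  show "jointly_convex_on_Gamma n D"
    unfolding jointly_convex_on_Gamma_def
  proof (intro ballI allI impI)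
    fix p1 q1 p2 q2 and t :: real
    assume Gamma: "p1 \<in> Gamma n" "q1 \<in> Gamma n" "p2 \<in> Gamma n" "q2 \<in> Gamma n"
      and t: "0 \<le> t \<and> t \<le> 1"
    have "D (mixture t p1 p2) (mixture t q1 q2) = f_divergence f n
        (mixture t (mixture a p1 q1) (mixture a p2 q2)) (mixture t (mixture c p1 q1) (mixture c p2 q2))"
      using D Gamma t mixture_in_Gamma by (simp add: mixture_mixture)
    also have "\<dots> \<le> t * f_divergence f n (mixture a p1 q1) (mixture c p1 q1)
        + (1 - t) * f_divergence f n (mixture a p2 q2) (mixture c p2 q2)"
      using Gamma c t ratio mixture_in_Gamma
      by (intro f_divergence_jointly_convex[OF f(1)]) (auto simp: Gamma_def)
    also have "\<dots> = t * D p1 q1 + (1 - t) * D p2 q2"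
      using D Gamma by simp
    finally show "D (\<lambda>i. t * p1 i + (1 - t) * p2 i) (\<lambda>i. t * q1 i + (1 - t) * q2 i)
        \<le> t * D p1 q1 + (1 - t) * D p2 q2"
      unfolding mixture_def .
  qed
qed

definition power_generator :: "real \<Rightarrow> real \<Rightarrow> real" where
  "power_generator s u =
    (if s = 0 then - ln u else if s = 1 then u * ln u else (u powr s - 1) / (s * (s - 1)))"

definition zeta_generator :: "real \<Rightarrow> real \<Rightarrow> real" where
  "zeta_generator s u =
    (if s = 1 then 2 * (u - 1) * ln u else 2 * (u - 1) * u powr (s - 1) / (s - 1))"

lemma power_generator_1 [simp]: "power_generator s 1 = 0"
  by (simp add: power_generator_def)

lemma zeta_generator_1 [simp]: "zeta_generator s 1 = 0"
  by (simp add: zeta_generator_def)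

lemma convex_on_power_generator: "convex_on {0<..} (power_generator s)"
proof -
  consider "s = 0" | "s = 1" | "s \<noteq> 0" "s \<noteq> 1" by blast
  then show ?thesis
  proof cases
    case 1
    show ?thesis
      unfolding power_generator_def 1
      by (rule f''_ge0_imp_convex[where f' = "\<lambda>u. - 1 / u" and f'' = "\<lambda>u. 1 / u\<^sup>2"])
        (auto intro!: derivative_eq_intros simp: power2_eq_square field_simps)
  next
    case 2
    show ?thesis
      unfolding power_generator_def 2
      by (rule f''_ge0_imp_convex[where f' = "\<lambda>u. ln u + 1" and f'' = "\<lambda>u. 1 / u"])
        (auto intro!: derivative_eq_intros simp: field_simps)
  next
    case 3
    have "convex_on {0<..} (\<lambda>u. (u powr s - 1) / (s * (s - 1)))"
    proof (rule f''_ge0_imp_convex[where f' = "\<lambda>u. u powr (s - 1) / (s - 1)" and f'' = "\<lambda>u. u powr (s - 2)"])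
      fix u :: real assume "u \<in> {0<..}"
      show "((\<lambda>u. (u powr s - 1) / (s * (s - 1))) has_real_derivative u powr (s - 1) / (s - 1)) (at u)"
        by (rule DERIV_cong[OF DERIV_cdivide])
          (use 3 \<open>u \<in> {0<..}\<close> in \<open>auto intro!: derivative_eq_intros\<close>)
      show "((\<lambda>u. u powr (s - 1) / (s - 1)) has_real_derivative u powr (s - 2)) (at u)"
        by (rule DERIV_cong[OF DERIV_cdivide])
          (use 3 \<open>u \<in> {0<..}\<close> in \<open>auto intro!: derivative_eq_intros\<close>)
    qed simp_all
    moreover have "power_generator s = (\<lambda>u. (u powr s - 1) / (s * (s - 1)))"
      using 3 by (simp add: power_generator_def fun_eq_iff)
    ultimately show ?thesis by simp
  qed
qed

lemma convex_on_zeta_generator: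
  assumes "0 \<le> s" "s \<le> 4"
  shows "convex_on {1/2<..} (zeta_generator s)"
proof (cases "s = 1")
  case True
  show ?thesis
    unfolding zeta_generator_def True
    by (rule f''_ge0_imp_convex[where f' = "\<lambda>u. 2 * ln u + 2 - 2 / u" and f'' = "\<lambda>u. 2 / u + 2 / u\<^sup>2"])
      (auto intro!: derivative_eq_intros simp: power2_eq_square field_simps)
next
  case False
  have "convex_on {1/2<..} (\<lambda>u. 2 * (u - 1) * u powr (s - 1) / (s - 1))"
  proof (rule f''_ge0_imp_convex[where f' = "\<lambda>u. 2 * u powr (s - 1) / (s - 1) + 2 * (u - 1) * u powr (s - 2)"
        and f'' = "\<lambda>u. 2 * u powr (s - 3) * (s * u - s + 2)"])
    fix u :: real assume "u \<in> {1/2<..}"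
    then have "0 < u" by simp
    then have "u powr (s - 2) = u * u powr (s - 3)"
      using powr_mult_base[of u "s - 3"] by simp
    show "((\<lambda>u. 2 * (u - 1) * u powr (s - 1) / (s - 1))
        has_real_derivative 2 * u powr (s - 1) / (s - 1) + 2 * (u - 1) * u powr (s - 2)) (at u)"
      by (rule DERIV_cong[OF DERIV_cdivide])
        (use False \<open>0 < u\<close> in \<open>auto intro!: derivative_eq_intros simp: field_simps\<close>)
    show "((\<lambda>u. 2 * u powr (s - 1) / (s - 1) + 2 * (u - 1) * u powr (s - 2))
        has_real_derivative 2 * u powr (s - 3) * (s * u - s + 2)) (at u)"
      by (rule DERIV_cong[OF DERIV_add[OF DERIV_cdivide]])
        (use False \<open>0 < u\<close> \<open>u powr (s - 2) = u * u powr (s - 3)\<close>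
          in \<open>auto intro!: derivative_eq_intros simp: field_simps\<close>)
    have "s * (1/2) \<le> s * u"
      using \<open>u \<in> {1/2<..}\<close> assms by (intro mult_left_mono) auto
    then show "0 \<le> 2 * u powr (s - 3) * (s * u - s + 2)"
      using assms by simp
  qed simp
  moreover have "zeta_generator s = (\<lambda>u. 2 * (u - 1) * u powr (s - 1) / (s - 1))"
    using False by (simp add: zeta_generator_def fun_eq_iff)
  ultimately show ?thesis by simp
qed

lemma Phi_eq_f_divergence:
  assumes "p \<in> Gamma n" "q \<in> Gamma n"
  shows "Phi s n p q = f_divergence (power_generator s) n p q"
proof -
  have pos: "0 < p i" "0 < q i" if "i < n" for i
    using assms that by (auto simp: Gamma_def)
  have "q i * power_generator s (p i / q i) =
      (if s = 0 then q i * ln (q i / p i) else if s = 1 then p i * ln (p i / q i)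
       else (p i powr s * q i powr (1 - s) - q i) / (s * (s - 1)))" if "i < n" for i
    using pos[OF that] by (auto simp: power_generator_def ln_div powr_divide powr_diff field_simps)
  then show ?thesis
    using assms by (auto simp: Phi_def f_divergence_def Gamma_def sum_divide_distrib[symmetric] sum_subtractf)
qed

lemma Omega_eq_f_divergence:
  assumes "p \<in> Gamma n" "q \<in> Gamma n"
  shows "Omega s n p q = f_divergence (power_generator s) n (mixture (1/2) p q) p"
proof -
  have pos: "0 < p i" "0 < q i" if "i < n" for i
    using assms that by (auto simp: Gamma_def)
  have "p i * power_generator s (mixture (1/2) p q i / p i) =
      (if s = 0 then p i * ln (2 * p i / (p i + q i))
       else if s = 1 then (p i + q i) / 2 * ln ((p i + q i) / (2 * p i))
       else (p i * ((p i + q i) / (2 * p i)) powr s - p i) / (s * (s - 1)))" if "i < n" for i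
    using pos[OF that] by (auto simp: power_generator_def mixture_def ln_div field_simps)
  then show ?thesis
    using assms by (auto simp: Omega_def f_divergence_def Gamma_def sum_divide_distrib[symmetric] sum_subtractf)
qed

lemma Zeta_eq_f_divergence:
  assumes "p \<in> Gamma n" "q \<in> Gamma n"
  shows "Zeta s n p q = f_divergence (zeta_generator s) n (mixture (1/2) p q) q"
proof -
  have pos: "0 < p i" "0 < q i" if "i < n" for i
    using assms that by (auto simp: Gamma_def)
  have "q i * zeta_generator s (mixture (1/2) p q i / q i) =
      (if s = 1 then (p i - q i) * ln ((p i + q i) / (2 * q i))
       else (p i - q i) * ((p i + q i) / (2 * q i)) powr (s - 1) / (s - 1))" if "i < n" for i
    using pos[OF that] by (auto simp: zeta_generator_def mixture_def field_simps)
  then show ?thesis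
    by (auto simp: Zeta_def f_divergence_def sum_divide_distrib)
qed

theorem mainTheorem2:
  fixes n :: nat
  assumes "2 \<le> n"
  shows "(\<forall>s::real.
            nonneg_on_Gamma n (Phi s n) \<and> jointly_convex_on_Gamma n (Phi s n) \<and>
            nonneg_on_Gamma n (Omega s n) \<and> jointly_convex_on_Gamma n (Omega s n) \<and>
            nonneg_on_Gamma n (\<lambda>p q. Omega s n q p) \<and> jointly_convex_on_Gamma n (\<lambda>p q. Omega s n q p))
       \<and> (\<forall>s::real. 0 \<le> s \<and> s \<le> 4 \<longrightarrow>
            nonneg_on_Gamma n (Zeta s n) \<and> jointly_convex_on_Gamma n (Zeta s n) \<and>
            nonneg_on_Gamma n (\<lambda>p q. Zeta s n q p) \<and> jointly_convex_on_Gamma n (\<lambda>p q. Zeta s n q p))"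
proof -
  have "0 < n" using assms by simp
  note power = f_divergence_of_mixtures_on_Gamma[OF convex_on_power_generator power_generator_1 \<open>0 < n\<close>]
  note zeta = f_divergence_of_mixtures_on_Gamma[OF convex_on_zeta_generator zeta_generator_1 \<open>0 < n\<close>]
  have "nonneg_on_Gamma n (Phi s n) \<and> jointly_convex_on_Gamma n (Phi s n)" for s
    by (rule power[of 1 0]) (auto simp: Phi_eq_f_divergence Gamma_def)
  moreover have "nonneg_on_Gamma n (Omega s n) \<and> jointly_convex_on_Gamma n (Omega s n)" for s
    by (rule power[of "1/2" 1])
      (auto simp: Omega_eq_f_divergence Gamma_def mixture_def intro!: divide_pos_pos add_pos_pos)
  moreover have "nonneg_on_Gamma n (\<lambda>p q. Omega s n q p) \<and> jointly_convex_on_Gamma n (\<lambda>p q. Omega s n q p)" for s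
    by (rule power[of "1/2" 0])
      (simp_all add: Omega_eq_f_divergence mixture_half_commute,
        auto simp: Gamma_def mixture_def intro!: divide_pos_pos add_pos_pos)
  moreover have "nonneg_on_Gamma n (Zeta s n) \<and> jointly_convex_on_Gamma n (Zeta s n)"
    if "0 \<le> s" "s \<le> 4" for s
    by (rule zeta[OF that, of "1/2" 0]) (auto simp: Zeta_eq_f_divergence Gamma_def mixture_def field_simps)
  moreover have "nonneg_on_Gamma n (\<lambda>p q. Zeta s n q p) \<and> jointly_convex_on_Gamma n (\<lambda>p q. Zeta s n q p)"
    if "0 \<le> s" "s \<le> 4" for s
    by (rule zeta[OF that, of "1/2" 1])
      (simp_all add: Zeta_eq_f_divergence mixture_half_commute, auto simp: Gamma_def mixture_def field_simps)
  ultimately show ?thesis by blast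
qed

end
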